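(* Let $n\in\mathbb{N}_{\geqslant 2}$, $k \in \{1,2,\dots ,2^n-1\}$ and $s \in \{0,1,\dots ,n-2\}$. Write $k=\sum_{i}k_i2^i$ in binary, and for $t\in\mathbb{N}_0$ define $a^k_{t},b^k_{t}\in\mathbb{N}_0$ by $k=a^k_{t}2^t+b^k_{t}$ with $0\leqslant b^k_t<2^t$. Suppose $|\psi\rangle$ is an $n$-qubit state of the form $$|\psi\rangle=\left(\sum_{l=a^k_s}^{2^{n-s}-1} c_l|l\rangle\right) \otimes |k_{s-1}k_{s-2}\dots k_{0}\rangle,$$ with $c_l\in \mathbb{C}$ (for $s=0$ the second tensor factor is absent), and assume that $c_{2a^k_{s+1}+1}=0$ if $k_s=0$ and $b^k_{s+1}\neq 0$. Then there exists a uniformly controlled gate $A$ of the form $$A=\sum_{l=0}^{2^{n-1-s}-1} |l\rangle\langle l| \otimes U_l \otimes I^{ \otimes s},$$ with single-qubit unitaries $U_l$, such that $$A|\psi\rangle=\left(\sum_{l=a^k_{s+1}}^{2^{n-(s+1)}-1} c'_l|l\rangle\right) \otimes |k_{s}k_{s-1}\dots k_{0}\rangle$$ for some $c'_l\in \mathbb{C}$, and additionally $A|i\rangle=|i\rangle$ for all $i\in\{0,1,\ldots,k-1\}$.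
   Context: Computational basis states are labelled by integers, $|b_{n-1}\dots b_0\rangle=|\sum_i b_i2^i\rangle$, with the most significant qubit first; the number of qubits of $|l\rangle$ is clear from context. The gate $A$ acts as a single-qubit unitary on the $(n-s)$th qubit (counting from the most significant), conditioned uniformly on the $n-1-s$ more significant qubits, and trivially on the $s$ least significant qubits. *)

theory Defs
  imports Complex_Main
begin

text \<open>n-qubit states are represented as amplitude functions nat => complex, supported on
  indices below 2^n; index x corresponds to the computational basis state |x>
  (most significant qubit first).\<close>

definition basis_state :: "nat \<Rightarrow> nat \<Rightarrow> complex" where
  "basis_state i = (\<lambda>x. if x = i then 1 else 0)"

text \<open>The n-qubit state (sum over l from a^k_t to 2^(n-t)-1 of c_l |l>) tensor |k_(t-1) ... k_0>,
  where a^k_t = k div 2^t and k_(t-1)...k_0 is the binary string of b^k_t = k mod 2^t.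
  The basis index of |l> tensor |b> is l * 2^t + b.\<close>
definition tail_state :: "nat \<Rightarrow> nat \<Rightarrow> nat \<Rightarrow> (nat \<Rightarrow> complex) \<Rightarrow> nat \<Rightarrow> complex" where
  "tail_state n t k c = (\<lambda>x. if x < 2^n \<and> x mod 2^t = k mod 2^t \<and> k div 2^t \<le> x div 2^t
                              then c (x div 2^t) else 0)"

definition unitary2 :: "(nat \<Rightarrow> nat \<Rightarrow> complex) \<Rightarrow> bool" where
  "unitary2 u \<longleftrightarrow> (\<forall>i<2. \<forall>j<2. (\<Sum>m<2. cnj (u m i) * u m j) = (if i = j then 1 else 0))"

text \<open>Matrix entries (row y, column x) of the uniformly controlled gate
  A = sum over l < 2^(n-1-s) of |l><l| tensor U_l tensor I^(tensor s) on n qubits.\<close>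
definition ucg_matrix :: "nat \<Rightarrow> nat \<Rightarrow> (nat \<Rightarrow> nat \<Rightarrow> nat \<Rightarrow> complex) \<Rightarrow> nat \<Rightarrow> nat \<Rightarrow> complex" where
  "ucg_matrix n s U y x =
     (if y < 2^n \<and> x < 2^n \<and> y div 2^(s+1) = x div 2^(s+1) \<and> y mod 2^s = x mod 2^s
      then U (y div 2^(s+1)) ((y div 2^s) mod 2) ((x div 2^s) mod 2) else 0)"

definition apply_op :: "nat \<Rightarrow> (nat \<Rightarrow> nat \<Rightarrow> complex) \<Rightarrow> (nat \<Rightarrow> complex) \<Rightarrow> nat \<Rightarrow> complex" where
  "apply_op n M \<psi> = (\<lambda>y. \<Sum>x<2^n. M y x * \<psi> x)"

end

theory Submission
  imports Defs
begin

text \<open>On the pair of amplitudes of |\<psi>> that a single controlled rotation U_l touches, only the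
  pair whose lower s bits agree with those of k can be nonzero. A Givens rotation moves that
  pair onto the basis vector labelled by the bit k_s, which produces the stated form with one
  more bit of k fixed. Where the pair is already aligned with k_s we take U_l = I; the
  hypothesis on c makes this so for the block containing k itself, and all smaller blocks
  carry no amplitude, so the gate fixes every |i> with i < k.\<close>

definition mat2 :: "complex \<Rightarrow> complex \<Rightarrow> complex \<Rightarrow> complex \<Rightarrow> nat \<Rightarrow> nat \<Rightarrow> complex" where
  "mat2 a b c d = (\<lambda>i j. if i = 0 then (if j = 0 then a else b) else (if j = 0 then c else d))"

definition id2 :: "nat \<Rightarrow> nat \<Rightarrow> complex" where
  "id2 = mat2 1 0 0 1"

text \<open>A unitary sending (\<alpha>, \<beta>) to a multiple of the basis vector |t>; it is the identity when
  the other component already vanishes.\<close>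
definition givens :: "complex \<Rightarrow> complex \<Rightarrow> nat \<Rightarrow> nat \<Rightarrow> nat \<Rightarrow> complex" where
  "givens \<alpha> \<beta> t = (let r = complex_of_real (sqrt (cmod \<alpha> ^ 2 + cmod \<beta> ^ 2)) in
     if t = 0 then (if \<beta> = 0 then id2 else mat2 (cnj \<alpha> / r) (cnj \<beta> / r) (- \<beta> / r) (\<alpha> / r))
     else (if \<alpha> = 0 then id2 else mat2 (- \<beta> / r) (\<alpha> / r) (cnj \<alpha> / r) (cnj \<beta> / r)))"

lemma unitary2_mat2_iff:
  "unitary2 (mat2 a b c d) \<longleftrightarrow>
     cnj a * a + cnj c * c = 1 \<and> cnj a * b + cnj c * d = 0 \<and>
     cnj b * a + cnj d * c = 0 \<and> cnj b * b + cnj d * d = 1"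
proof -
  have all_less_2: "\<And>P. (\<forall>i<2::nat. P i) \<longleftrightarrow> P 0 \<and> P 1"
    by (auto simp: less_2_cases_iff)
  show ?thesis
    unfolding unitary2_def all_less_2 by (simp add: mat2_def numeral_2_eq_2)
qed

lemma unitary2_id2: "unitary2 id2"
  unfolding id2_def unitary2_mat2_iff by simp

lemma id2_apply: "i < 2 \<Longrightarrow> j < 2 \<Longrightarrow> id2 i j = (if i = j then 1 else 0)"
  by (auto simp: id2_def mat2_def less_2_cases_iff)

lemma cnj_mult_add_cnj_mult_eq_norm_square:
  "cnj \<alpha> * \<alpha> + cnj \<beta> * \<beta> = (complex_of_real (sqrt (cmod \<alpha> ^ 2 + cmod \<beta> ^ 2)))\<^sup>2"
proof -
  have "(complex_of_real (sqrt (cmod \<alpha> ^ 2 + cmod \<beta> ^ 2)))\<^sup>2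
        = complex_of_real (cmod \<alpha> ^ 2) + complex_of_real (cmod \<beta> ^ 2)"
    by (simp flip: of_real_power of_real_add)
  also have "\<dots> = cnj \<alpha> * \<alpha> + cnj \<beta> * \<beta>"
    by (simp only: complex_norm_square mult.commute)
  finally show ?thesis by simp
qed

lemma unitary2_givens: "unitary2 (givens \<alpha> \<beta> t)"
proof -
  define r where "r = complex_of_real (sqrt (cmod \<alpha> ^ 2 + cmod \<beta> ^ 2))"
  have r_real: "cnj r = r"
    unfolding r_def by simp
  have r_square: "cnj \<alpha> * \<alpha> + cnj \<beta> * \<beta> = r * r"
    unfolding r_def cnj_mult_add_cnj_mult_eq_norm_square by (simp add: power2_eq_square)
  have r_nonzero: "r \<noteq> 0" if "\<alpha> \<noteq> 0 \<or> \<beta> \<noteq> 0"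
    using that unfolding r_def by (auto simp: add_nonneg_eq_0_iff)
  have "unitary2 (mat2 (cnj \<alpha> / r) (cnj \<beta> / r) (- \<beta> / r) (\<alpha> / r))" if "\<beta> \<noteq> 0"
    unfolding unitary2_mat2_iff using r_nonzero that r_real r_square
    by (simp add: field_simps; simp add: algebra_simps)
  moreover have "unitary2 (mat2 (- \<beta> / r) (\<alpha> / r) (cnj \<alpha> / r) (cnj \<beta> / r))" if "\<alpha> \<noteq> 0"
    unfolding unitary2_mat2_iff using r_nonzero that r_real r_square
    by (simp add: field_simps; simp add: algebra_simps)
  ultimately show ?thesis
    by (simp add: givens_def Let_def unitary2_id2 flip: r_def)
qed

lemma givens_annihilates:
  "t < 2 \<Longrightarrow> j < 2 \<Longrightarrow> j \<noteq> t \<Longrightarrow> givens \<alpha> \<beta> t j 0 * \<alpha> + givens \<alpha> \<beta> t j 1 * \<beta> = 0"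
  by (auto simp: givens_def Let_def mat2_def id2_def less_2_cases_iff field_simps)

lemma givens_eq_id2_if_snd_zero: "\<beta> = 0 \<Longrightarrow> givens \<alpha> \<beta> 0 = id2"
  by (simp add: givens_def)

lemma givens_eq_id2_if_fst_zero: "t \<noteq> 0 \<Longrightarrow> \<alpha> = 0 \<Longrightarrow> givens \<alpha> \<beta> t = id2"
  by (simp add: givens_def)

definition join_index :: "nat \<Rightarrow> nat \<Rightarrow> nat \<Rightarrow> nat \<Rightarrow> nat" where
  "join_index s l j m = (2 * l + j) * 2^s + m"

lemma div_power_Suc: "(x::nat) div 2^(s+1) = x div 2^s div 2"
  by (simp only: power_Suc2 Suc_eq_plus1[symmetric] div_mult2_eq)

lemma div_power_split: "(x::nat) div 2^s = 2 * (x div 2^(s+1)) + x div 2^s mod 2"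
  unfolding div_power_Suc by simp

lemma mod_power_Suc: "(x::nat) mod 2^(s+1) = x div 2^s mod 2 * 2^s + x mod 2^s"
  by (metis mod_mult2_eq mult.commute power_Suc2 Suc_eq_plus1)

lemma join_index_split: "join_index s (x div 2^(s+1)) (x div 2^s mod 2) (x mod 2^s) = x"
proof -
  have "2 * (x div 2^s div 2) + x div 2^s mod 2 = x div 2^s"
    by simp
  then show ?thesis
    unfolding join_index_def div_power_Suc by (metis div_mult_mod_eq)
qed

lemma
  assumes "m < 2^s"
  shows join_index_div: "join_index s l j m div 2^s = 2 * l + j"
    and join_index_mod: "join_index s l j m mod 2^s = m"
  using assms unfolding join_index_def by simp_all

lemma
  assumes "m < 2^s" "j < 2"
  shows join_index_div_Suc: "join_index s l j m div 2^(s+1) = l"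
    and join_index_bit: "join_index s l j m div 2^s mod 2 = j"
  using assms unfolding div_power_Suc by (simp_all add: join_index_div)

lemma join_index_less:
  assumes "y < (2::nat)^n" "s < n" "m < 2^s" "j < 2"
  shows "join_index s (y div 2^(s+1)) j m < 2^n"
proof -
  have "n = (n-(s+1)) + (s+1)"
    using \<open>s < n\<close> by simp
  then have two_power_n: "(2::nat)^n = 2^(n-(s+1)) * 2^(s+1)"
    by (metis power_add)
  have "y div 2^(s+1) < 2^(n-(s+1))"
    using assms(1) two_power_n by (simp add: less_mult_imp_div_less)
  then have "Suc (y div 2^(s+1)) * 2^(s+1) \<le> 2^n"
    unfolding two_power_n by (intro mult_right_mono) auto
  moreover have "join_index s (y div 2^(s+1)) j m < Suc (y div 2^(s+1)) * 2^(s+1)"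
    using assms(3,4) unfolding join_index_def by (auto simp: algebra_simps less_2_cases_iff)
  ultimately show ?thesis by linarith
qed

lemma tail_state_join_index:
  assumes "m < 2^s"
  shows "tail_state n s k c (join_index s l j m) =
    (if join_index s l j m < 2^n \<and> m = k mod 2^s \<and> k div 2^s \<le> 2 * l + j then c (2 * l + j) else 0)"
  unfolding tail_state_def join_index_div[OF assms] join_index_mod[OF assms] by simp

lemma ex_tail_state_if_support:
  assumes "\<And>y. \<phi> y \<noteq> 0 \<Longrightarrow> y < 2^n \<and> y mod 2^t = k mod 2^t \<and> k div 2^t \<le> y div 2^t"
  shows "\<exists>c. \<phi> = tail_state n t k c"
proof
  show "\<phi> = tail_state n t k (\<lambda>l. \<phi> (l * 2^t + k mod 2^t))"
  proof
    fix y
    show "\<phi> y = tail_state n t k (\<lambda>l. \<phi> (l * 2^t + k mod 2^t)) y"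
      using assms[of y] div_mult_mod_eq[of y "2^t"] unfolding tail_state_def by auto
  qed
qed

lemma apply_op_basis_state: "i < 2^n \<Longrightarrow> apply_op n M (basis_state i) y = M y i"
  unfolding apply_op_def basis_state_def
  by (simp add: if_distrib[of "\<lambda>z. M y _ * z"] cong: if_cong)

lemma apply_ucg_matrix_outside: "\<not> y < 2^n \<Longrightarrow> apply_op n (ucg_matrix n s U) \<phi> y = 0"
  by (simp add: apply_op_def ucg_matrix_def)

lemma apply_ucg_matrix:
  assumes y: "y < (2::nat)^n" and "s < n"
  defines "l \<equiv> y div 2^(s+1)" and "m \<equiv> y mod 2^s"
  shows "apply_op n (ucg_matrix n s U) \<phi> y =
     U l (y div 2^s mod 2) 0 * \<phi> (join_index s l 0 m) + U l (y div 2^s mod 2) 1 * \<phi> (join_index s l 1 m)"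
proof -
  define t where "t = y div 2^s mod 2"
  have m: "m < 2^s"
    unfolding m_def by simp
  have column_set: "{x \<in> {..<2^n}. x div 2^(s+1) = l \<and> x mod 2^s = m} = (\<lambda>j. join_index s l j m) ` {..<2}"
  proof (intro equalityI subsetI)
    fix x assume "x \<in> {x \<in> {..<2^n}. x div 2^(s+1) = l \<and> x mod 2^s = m}"
    then have "x = join_index s l (x div 2^s mod 2) m"
      using join_index_split[of s x] by simp
    then show "x \<in> (\<lambda>j. join_index s l j m) ` {..<2}"
      by (intro image_eqI[of _ _ "x div 2^s mod 2"]) auto
  next
    fix x assume "x \<in> (\<lambda>j. join_index s l j m) ` {..<2}"
    then show "x \<in> {x \<in> {..<2^n}. x div 2^(s+1) = l \<and> x mod 2^s = m}"
      using join_index_less[OF y \<open>s < n\<close> m] join_index_div_Suc[OF m] join_index_mod[OF m]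
      unfolding l_def by auto
  qed
  have "inj_on (\<lambda>j. join_index s l j m) {..<2}"
    by (rule inj_on_inverseI[of _ "\<lambda>x. x div 2^s mod 2"]) (simp add: join_index_bit[OF m])
  then have "(\<Sum>x \<in> (\<lambda>j. join_index s l j m) ` {..<2}. U l t (x div 2^s mod 2) * \<phi> x)
      = (\<Sum>j<2. U l t j * \<phi> (join_index s l j m))"
    by (simp add: sum.reindex join_index_bit[OF m])
  moreover have "apply_op n (ucg_matrix n s U) \<phi> y
      = (\<Sum>x<2^n. if x div 2^(s+1) = l \<and> x mod 2^s = m then U l t (x div 2^s mod 2) * \<phi> x else 0)"
    unfolding apply_op_def ucg_matrix_def l_def m_def t_def using y by (intro sum.cong) auto
  ultimately show ?thesis
    unfolding sum.inter_filter[symmetric, OF finite_lessThan] column_set t_def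
    by (simp add: numeral_2_eq_2)
qed

lemma ucg_matrix_fixes_basis_state:
  assumes "i < 2^n" and "U (i div 2^(s+1)) = id2"
  shows "apply_op n (ucg_matrix n s U) (basis_state i) = basis_state i"
proof
  fix y
  have "y = i \<longleftrightarrow> y div 2^s mod 2 = i div 2^s mod 2"
    if "y div 2^(s+1) = i div 2^(s+1)" "y mod 2^s = i mod 2^s"
    using that join_index_split[of s y] join_index_split[of s i] by metis
  then show "apply_op n (ucg_matrix n s U) (basis_state i) y = basis_state i y"
    unfolding apply_op_basis_state[OF assms(1)]
    using assms by (auto simp: ucg_matrix_def basis_state_def id2_apply)
qed

definition givens_ucg :: "nat \<Rightarrow> nat \<Rightarrow> (nat \<Rightarrow> complex) \<Rightarrow> nat \<Rightarrow> nat \<Rightarrow> nat \<Rightarrow> complex" where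
  "givens_ucg s k \<psi> = (\<lambda>l. givens (\<psi> (join_index s l 0 (k mod 2^s))) (\<psi> (join_index s l 1 (k mod 2^s)))
                                   (k div 2^s mod 2))"

lemma unitary2_givens_ucg: "unitary2 (givens_ucg s k \<psi> l)"
  unfolding givens_ucg_def by (rule unitary2_givens)

lemma givens_ucg_tail_state:
  assumes "s < n"
  shows "\<exists>c'. apply_op n (ucg_matrix n s (givens_ucg s k (tail_state n s k c))) (tail_state n s k c)
              = tail_state n (s+1) k c'"
proof (rule ex_tail_state_if_support)
  define \<psi> where "\<psi> = tail_state n s k c"
  fix y
  assume nonzero: "apply_op n (ucg_matrix n s (givens_ucg s k \<psi>)) \<psi> y \<noteq> 0"
  then have y: "y < 2^n"
    using apply_ucg_matrix_outside by blast
  define l where "l = y div 2^(s+1)"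
  define t where "t = y div 2^s mod 2"
  define m where "m = y mod 2^s"
  have m: "m < 2^s" and t: "t < 2"
    unfolding m_def t_def by simp_all
  have \<psi>_zero: "\<psi> (join_index s l j m) = 0" if "m \<noteq> k mod 2^s \<or> 2 * l + j < k div 2^s" for j
    using that unfolding \<psi>_def tail_state_join_index[OF m] by auto
  have amplitude: "apply_op n (ucg_matrix n s (givens_ucg s k \<psi>)) \<psi> y
      = givens_ucg s k \<psi> l t 0 * \<psi> (join_index s l 0 m) + givens_ucg s k \<psi> l t 1 * \<psi> (join_index s l 1 m)"
    unfolding l_def t_def m_def by (rule apply_ucg_matrix[OF y assms])
  have "m = k mod 2^s"
    using nonzero amplitude \<psi>_zero[of 0] \<psi>_zero[of 1] by force
  moreover have "t = k div 2^s mod 2"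
  proof (rule ccontr)
    assume "t \<noteq> k div 2^s mod 2"
    then have "givens_ucg s k \<psi> l t 0 * \<psi> (join_index s l 0 m)
        + givens_ucg s k \<psi> l t 1 * \<psi> (join_index s l 1 m) = 0"
      unfolding givens_ucg_def \<open>m = k mod 2^s\<close> using t by (intro givens_annihilates) simp_all
    then show False
      using nonzero amplitude by argo
  qed
  moreover have "k div 2^(s+1) \<le> l"
  proof (rule ccontr)
    assume "\<not> k div 2^(s+1) \<le> l"
    then have "2 * l + 1 < k div 2^s"
      using div_power_split[of k s] by linarith
    then have "\<psi> (join_index s l 0 m) = 0" "\<psi> (join_index s l 1 m) = 0"
      using \<psi>_zero[of 0] \<psi>_zero[of 1] by simp_all
    then show False
      using nonzero amplitude by simp
  qed
  ultimately show "y < 2^n \<and> y mod 2^(s+1) = k mod 2^(s+1) \<and> k div 2^(s+1) \<le> y div 2^(s+1)"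
    using y mod_power_Suc[of y s] mod_power_Suc[of k s] unfolding l_def t_def m_def by simp
qed

lemma givens_ucg_fixes_basis_state:
  assumes "i < k" "k < 2^n"
    and "k div 2^s mod 2 = 0 \<and> k mod 2^(s+1) \<noteq> 0 \<Longrightarrow> c (2 * (k div 2^(s+1)) + 1) = 0"
  shows "apply_op n (ucg_matrix n s (givens_ucg s k (tail_state n s k c))) (basis_state i) = basis_state i"
proof (rule ucg_matrix_fixes_basis_state)
  define \<psi> where "\<psi> = tail_state n s k c"
  define a where "a = k div 2^(s+1)"
  define b where "b = k mod 2^s"
  have b: "b < 2^s"
    unfolding b_def by simp
  have \<psi>_join: "\<psi> (join_index s l j b) = (if join_index s l j b < 2^n \<and> k div 2^s \<le> 2 * l + j
      then c (2 * l + j) else 0)" for l j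
    unfolding \<psi>_def b_def tail_state_join_index[OF b[unfolded b_def]] by simp
  have k_div: "k div 2^s = 2 * a + k div 2^s mod 2"
    unfolding a_def by (rule div_power_split)
  have "i div 2^(s+1) \<le> a"
    unfolding a_def using \<open>i < k\<close> by (simp add: div_le_mono)
  moreover have "givens_ucg s k \<psi> l = id2" if "l < a" for l
    using that \<psi>_join k_div unfolding givens_ucg_def b_def[symmetric]
    by (cases "k div 2^s mod 2 = 0") (auto simp: givens_eq_id2_if_snd_zero givens_eq_id2_if_fst_zero)
  moreover have "givens_ucg s k \<psi> a = id2" if "i div 2^(s+1) = a"
  proof -
    have "k mod 2^(s+1) \<noteq> 0"
      using that \<open>i < k\<close> div_mult_mod_eq[of k "2^(s+1)"] div_times_less_eq_dividend[of i "2^(s+1)"]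
      unfolding a_def by fastforce
    then show ?thesis
      using assms(3) \<psi>_join k_div unfolding givens_ucg_def b_def[symmetric] a_def[symmetric]
      by (cases "k div 2^s mod 2 = 0") (auto simp: givens_eq_id2_if_snd_zero givens_eq_id2_if_fst_zero)
  qed
  ultimately show "givens_ucg s k \<psi> (i div 2^(s+1)) = id2"
    by (cases "i div 2^(s+1) < a") auto
  show "i < 2^n"
    using assms(1,2) by simp
qed

theorem lemma10:
  fixes n k s :: nat and c :: "nat \<Rightarrow> complex"
  assumes "n \<ge> 2"
    and "1 \<le> k" and "k \<le> 2^n - 1"
    and "s \<le> n - 2"
    and "(k div 2^s) mod 2 = 0 \<and> k mod 2^(s+1) \<noteq> 0 \<Longrightarrow> c (2 * (k div 2^(s+1)) + 1) = 0"
  shows "\<exists>U :: nat \<Rightarrow> nat \<Rightarrow> nat \<Rightarrow> complex.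
           (\<forall>l < 2^(n-1-s). unitary2 (U l)) \<and>
           (\<exists>c' :: nat \<Rightarrow> complex.
              apply_op n (ucg_matrix n s U) (tail_state n s k c) = tail_state n (s+1) k c') \<and>
           (\<forall>i < k. apply_op n (ucg_matrix n s U) (basis_state i) = basis_state i)"
proof -
  have "s < n" and "k < 2^n"
    using assms(1-4) by (linarith, simp add: le_diff_iff')
  let ?U = "givens_ucg s k (tail_state n s k c)"
  have "\<forall>l. unitary2 (?U l)"
    using unitary2_givens_ucg by blast
  moreover have "\<exists>c'. apply_op n (ucg_matrix n s ?U) (tail_state n s k c) = tail_state n (s+1) k c'"
    using givens_ucg_tail_state[OF \<open>s < n\<close>] .
  moreover have "\<forall>i < k. apply_op n (ucg_matrix n s ?U) (basis_state i) = basis_state i"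
    using givens_ucg_fixes_basis_state[of _ k n s c] \<open>k < 2^n\<close> assms(5) by blast
  ultimately show ?thesis
    by blast
qed

end
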